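(* Let $R$ be a ring with identity and an involution $*$, and let $a\in R$. Then: (i) $a$ is right $(a^*,1)$-invertible if and only if $R=aa^*R$; and $a$ is left $(1,a^* )$-invertible if and only if $R=Ra^*a$; (ii) $a$ is left $(a,a^* )$-invertible if and only if $Ra=Ra^*a^2$; and $a$ is right $(a,a^* )$-invertible if and only if $a^*R=a^*a^2R$; (iii) $a$ is left $(a^*,a)$-invertible if and only if $Ra^*=Ra^2a^*$; and $a$ is right $(a^*,a)$-invertible if and only if $aR=a^2a^*R$.
   Context: An involution is a map $*:R\to R$ with $(x^* )^*=x$, $(xy)^*=y^*x^*$, $(x+y)^*=x^*+y^*$. For $x\in R$: $xR=\{xr:r\in R\}$, $Rx=\{rx:r\in R\}$. For $a,b,c\in R$, $a$ is left $(b,c)$-invertible if there is $y$ with $Ry\subseteq Rc$ and $yab=b$; right $(b,c)$-invertible if there is $y$ with $yR\subseteq bR$ and $cay=c$. *)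

theory Defs
  imports Main
begin

definition is_involution :: "('a::ring_1 \<Rightarrow> 'a) \<Rightarrow> bool" where
  "is_involution s \<longleftrightarrow> (\<forall>x. s (s x) = x) \<and> (\<forall>x y. s (x * y) = s y * s x)
     \<and> (\<forall>x y. s (x + y) = s x + s y)"

definition rideal :: "'a::ring_1 \<Rightarrow> 'a set" where
  "rideal x = {x * r | r. True}"

definition lideal :: "'a::ring_1 \<Rightarrow> 'a set" where
  "lideal x = {r * x | r. True}"

definition left_bc_inv :: "'a::ring_1 \<Rightarrow> 'a \<Rightarrow> 'a \<Rightarrow> bool" where
  "left_bc_inv b c a \<longleftrightarrow> (\<exists>y. lideal y \<subseteq> lideal c \<and> y * a * b = b)"

definition right_bc_inv :: "'a::ring_1 \<Rightarrow> 'a \<Rightarrow> 'a \<Rightarrow> bool" where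
  "right_bc_inv b c a \<longleftrightarrow> (\<exists>y. rideal y \<subseteq> rideal b \<and> c * a * y = c)"

end

theory Submission
  imports Defs
begin

text \<open>Left \<open>(b,c)\<close>-invertibility of \<open>a\<close> says exactly that \<open>b \<in> R c a b\<close>, i.e. that the
  principal left ideals generated by \<open>b\<close> and \<open>c a b\<close> coincide; dually, right
  \<open>(b,c)\<close>-invertibility means \<open>c R = c a b R\<close>. Each clause of the theorem is an
  instance with \<open>b, c \<in> {1, a, a\<^sup>*}\<close>.\<close>

lemma lideal_subset_iff: "lideal y \<subseteq> lideal (x::'a::ring_1) \<longleftrightarrow> (\<exists>r. y = r * x)"
proof
  assume "lideal y \<subseteq> lideal x"
  moreover have "y \<in> lideal y" unfolding lideal_def by (auto intro: exI[of _ 1])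
  ultimately show "\<exists>r. y = r * x" unfolding lideal_def by blast
qed (auto simp: lideal_def mult.assoc[symmetric])

lemma rideal_subset_iff: "rideal y \<subseteq> rideal (x::'a::ring_1) \<longleftrightarrow> (\<exists>r. y = x * r)"
proof
  assume "rideal y \<subseteq> rideal x"
  moreover have "y \<in> rideal y" unfolding rideal_def by (auto intro: exI[of _ 1])
  ultimately show "\<exists>r. y = x * r" unfolding rideal_def by blast
qed (auto simp: rideal_def mult.assoc)

lemma lideal_eq_lideal_mult_iff:
  "lideal (x::'a::ring_1) = lideal (z * x) \<longleftrightarrow> (\<exists>r. r * z * x = x)"
proof -
  have "lideal (z * x) \<subseteq> lideal x"
    by (auto simp: lideal_subset_iff)
  then have "lideal x = lideal (z * x) \<longleftrightarrow> lideal x \<subseteq> lideal (z * x)"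
    by blast
  then show ?thesis
    by (simp add: lideal_subset_iff mult.assoc eq_commute[of x])
qed

lemma rideal_eq_rideal_mult_iff:
  "rideal (x::'a::ring_1) = rideal (x * z) \<longleftrightarrow> (\<exists>r. x * z * r = x)"
proof -
  have "rideal (x * z) \<subseteq> rideal x"
    by (auto simp: rideal_subset_iff)
  then have "rideal x = rideal (x * z) \<longleftrightarrow> rideal x \<subseteq> rideal (x * z)"
    by blast
  then show ?thesis
    by (simp add: rideal_subset_iff eq_commute[of x])
qed

lemma lideal_one [simp]: "lideal (1::'a::ring_1) = UNIV"
  by (auto simp: lideal_def)

lemma rideal_one [simp]: "rideal (1::'a::ring_1) = UNIV"
  by (auto simp: rideal_def intro: exI[of _ 1])

lemma left_bc_inv_iff_lideal_eq: "left_bc_inv b c a \<longleftrightarrow> lideal b = lideal (c * a * b)"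
  unfolding left_bc_inv_def lideal_subset_iff lideal_eq_lideal_mult_iff
  by (auto simp: mult.assoc)

lemma right_bc_inv_iff_rideal_eq: "right_bc_inv b c a \<longleftrightarrow> rideal c = rideal (c * a * b)"
  unfolding right_bc_inv_def rideal_subset_iff
  by (auto simp: mult.assoc rideal_eq_rideal_mult_iff[of c "a * b"])

theorem proposition2p19:
  fixes s :: "'a::ring_1 \<Rightarrow> 'a" and a :: 'a
  assumes "is_involution s"
  shows "(right_bc_inv (s a) 1 a \<longleftrightarrow> UNIV = rideal (a * s a))
       \<and> (left_bc_inv 1 (s a) a \<longleftrightarrow> UNIV = lideal (s a * a))
       \<and> (left_bc_inv a (s a) a \<longleftrightarrow> lideal a = lideal (s a * a ^ 2))
       \<and> (right_bc_inv a (s a) a \<longleftrightarrow> rideal (s a) = rideal (s a * a ^ 2))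
       \<and> (left_bc_inv (s a) a a \<longleftrightarrow> lideal (s a) = lideal (a ^ 2 * s a))
       \<and> (right_bc_inv (s a) a a \<longleftrightarrow> rideal a = rideal (a ^ 2 * s a))"
  by (simp add: left_bc_inv_iff_lideal_eq right_bc_inv_iff_rideal_eq
      power2_eq_square mult.assoc eq_commute[of UNIV])

end
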